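(* Let $a\le n$, $k\in\mathbb Z$, and $u,w\in S_{[a,n]}$ with $u\xrightarrow{k}w$. If $i\in u((k,n])$ and $i\notin\mathrm{fix}_{(k,n]}(u,w)$, then there exists $t\in[a,k]$ with $w(t)\ge i$.
   Context: $S_{[a,n]}$ is the set of bijections of $\mathbb Z$ fixing every integer outside $[a,n]$; $\tau_{i,j}$ is the transposition of $i<j$, $u\tau_{i,j}=u\circ\tau_{i,j}$, $\ell(u)$ is the number of inversions. $u\lessdot_k u\tau_{i,j}$ if $i\le k<j$ and $\ell(u\tau_{i,j})=\ell(u)+1$. $u\xrightarrow{k}w$ means there is a chain $u=v_1\lessdot_k\cdots\lessdot_k v_s=w$ ($s\ge1$), $v_{t+1}=v_t\tau_{i_t,j_t}$, with $v_1(i_1)<\cdots<v_{s-1}(i_{s-1})$. For $I\subseteq\mathbb Z$, $\mathrm{fix}_I(u,w)=\{u(t):t\in I,\ u(t)=w(t)\}$. *)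

theory Defs
  imports "HOL-Combinatorics.Transposition"
begin

definition S_int :: "int \<Rightarrow> int \<Rightarrow> (int \<Rightarrow> int) set" where
  "S_int a n = {u. bij u \<and> (\<forall>t. t \<notin> {a..n} \<longrightarrow> u t = t)}"

definition inv_len :: "(int \<Rightarrow> int) \<Rightarrow> nat" where
  "inv_len u = card {(i, j). i < j \<and> u j < u i}"

definition kcover :: "int \<Rightarrow> int \<Rightarrow> int \<Rightarrow> (int \<Rightarrow> int) \<Rightarrow> (int \<Rightarrow> int) \<Rightarrow> bool" where
  "kcover k i j u v \<longleftrightarrow> i \<le> k \<and> k < j \<and> v = u \<circ> transpose i j \<and> inv_len v = inv_len u + 1"

definition kchain :: "int \<Rightarrow> (int \<Rightarrow> int) \<Rightarrow> (int \<Rightarrow> int) \<Rightarrow> bool" where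
  "kchain k u w \<longleftrightarrow> (\<exists>(s::nat) (v::nat \<Rightarrow> int \<Rightarrow> int) (ii::nat \<Rightarrow> int) (jj::nat \<Rightarrow> int).
      s \<ge> 1 \<and> v 0 = u \<and> v (s - 1) = w \<and>
      (\<forall>t. t + 1 < s \<longrightarrow> kcover k (ii t) (jj t) (v t) (v (t + 1))) \<and>
      (\<forall>t. t + 2 < s \<longrightarrow> v t (ii t) < v (t + 1) (ii (t + 1))))"

definition fixI :: "int set \<Rightarrow> (int \<Rightarrow> int) \<Rightarrow> (int \<Rightarrow> int) \<Rightarrow> int set" where
  "fixI I u w = {u t | t. t \<in> I \<and> u t = w t}"

end

theory Submission
  imports Defs
begin

text \<open>
  A k-cover u \<lessdot>_k u \<tau>_{x,y} must have u(x) < u(y), since swapping an inversion never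
  increases the number of inversions. Hence a k-cover raises the value at one position x \<le> k
  and changes the value at one position y > k only by handing it to x. Along a chain from u
  to w, the value i = u(p) at a position p > k that is not fixed must therefore be handed to
  some position q \<le> k, where values only grow: w(q) \<ge> i > u(q). Such a q cannot lie below a,
  where u and w agree.
\<close>

definition inversions :: "(int \<Rightarrow> int) \<Rightarrow> (int \<times> int) set" where
  "inversions u = {(x, y). x < y \<and> u y < u x}"

lemma inv_len_eq_card_inversions: "inv_len u = card (inversions u)"
  by (simp add: inv_len_def inversions_def)

lemma inv_len_transpose_inversion_le:
  fixes u :: "int \<Rightarrow> int"
  assumes ij: "i < j" and le: "u j \<le> u i"
  shows "inv_len (u \<circ> transpose i j) \<le> inv_len u"
proof (cases "finite (inversions (u \<circ> transpose i j))")
  case False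
  then show ?thesis by (simp add: inv_len_eq_card_inversions)
next
  case fin: True
  let ?Iu = "inversions u" and ?Iv = "inversions (u \<circ> transpose i j)"
  \<comment> \<open>f injects inversions of u \<tau> into those of u: pairs inside [i, j] sharing one endpoint
    with (i, j) remain inversions as they are, all other pairs correspond via \<tau>\<close>
  define F where "F = {(i, j)} \<union> {(i, m) |m. i < m \<and> m < j} \<union> {(m, j) |m. i < m \<and> m < j}"
  define f where "f = (\<lambda>(x, y). if (x, y) \<in> F then (x, y) else (transpose i j x, transpose i j y))"
  have "finite F"
    by (rule finite_subset[of _ "{i..j} \<times> {i..j}"]) (use ij in \<open>auto simp: F_def\<close>)
  have "?Iu \<subseteq> F \<union> f ` ?Iv"
  proof
    fix p assume p: "p \<in> ?Iu"
    obtain x y where xy: "p = (x, y)" by (cases p)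
    show "p \<in> F \<union> f ` ?Iv"
    proof (cases "p \<in> F")
      case False
      have q: "(transpose i j x, transpose i j y) \<in> ?Iv - F"
        using p False ij unfolding xy inversions_def F_def
        by (auto simp: transpose_def split: if_splits)
      then have "f (transpose i j x, transpose i j y) = p"
        unfolding f_def xy by (simp add: transpose_def)
      with q show ?thesis by blast
    qed simp
  qed
  then have "finite ?Iu"
    using \<open>finite F\<close> fin by (meson finite_UnI finite_imageI finite_subset)
  moreover have "inj_on f ?Iv"
  proof (rule inj_onI)
    fix p q assume "p \<in> ?Iv" "q \<in> ?Iv" "f p = f q"
    then show "p = q"
      using ij unfolding f_def inversions_def F_def
      by (cases p, cases q) (auto simp: transpose_def split: if_splits)
  qed
  moreover have "f ` ?Iv \<subseteq> ?Iu"
  proof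
    fix r assume "r \<in> f ` ?Iv"
    then obtain p where "p \<in> ?Iv" "r = f p" by blast
    then show "r \<in> ?Iu"
      using ij le unfolding f_def inversions_def F_def
      by (cases p) (auto simp: transpose_def split: if_splits)
  qed
  ultimately show ?thesis
    by (simp add: inv_len_eq_card_inversions card_inj_on_le)
qed

lemma kcover_imp_less:
  assumes "kcover k i j u v"
  shows "u i < u j"
proof (rule ccontr)
  assume "\<not> u i < u j"
  moreover have "i < j" "v = u \<circ> transpose i j" "inv_len v = inv_len u + 1"
    using assms by (auto simp: kcover_def)
  ultimately show False
    using inv_len_transpose_inversion_le[of i j u] by simp
qed

definition kstep :: "int \<Rightarrow> (int \<Rightarrow> int) \<Rightarrow> (int \<Rightarrow> int) \<Rightarrow> bool" where
  "kstep k u v \<longleftrightarrow> (\<exists>i j. kcover k i j u v)"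

lemma kchain_imp_rtranclp_kstep:
  assumes "kchain k u w"
  shows "(kstep k)\<^sup>*\<^sup>* u w"
proof -
  obtain s v ii jj where "(s::nat) \<ge> 1" "v 0 = u" "v (s - 1) = w"
    and cover: "\<And>t. t + 1 < s \<Longrightarrow> kcover k (ii t) (jj t) (v t) (v (t + 1))"
    using assms unfolding kchain_def by blast
  have "t < s \<Longrightarrow> (kstep k)\<^sup>*\<^sup>* (v 0) (v t)" for t
  proof (induction t)
    case (Suc t)
    then have "kstep k (v t) (v (Suc t))"
      using cover[of t] by (auto simp: kstep_def)
    with Suc show ?case by (simp add: rtranclp.rtrancl_into_rtrancl)
  qed simp
  from this[of "s - 1"] show ?thesis
    using \<open>s \<ge> 1\<close> \<open>v 0 = u\<close> \<open>v (s - 1) = w\<close> by simp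
qed

lemma kstep_left_mono:
  assumes "kstep k u v" and "q \<le> k"
  shows "u q \<le> v q"
proof -
  obtain i j where c: "kcover k i j u v"
    using assms(1) by (auto simp: kstep_def)
  then have "u i < u j" by (rule kcover_imp_less)
  with c assms(2) show ?thesis
    by (auto simp: kcover_def transpose_def)
qed

lemma rtranclp_kstep_left_mono:
  assumes "(kstep k)\<^sup>*\<^sup>* u w" and "q \<le> k"
  shows "u q \<le> w q"
  using assms(1)
  by induction (auto dest: kstep_left_mono[OF _ assms(2)])

lemma rtranclp_kstep_moved_value:
  assumes "(kstep k)\<^sup>*\<^sup>* u w" and "k < p" and "w p \<noteq> u p"
  shows "\<exists>q \<le> k. u q < u p \<and> u p \<le> w q"
  using assms(1,3)
proof (induction rule: rtranclp_induct)
  case base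
  then show ?case by simp
next
  case (step v w)
  obtain i j where c: "kcover k i j v w"
    using step.hyps(2) by (auto simp: kstep_def)
  then have ik: "i \<le> k" and kj: "k < j" and w_def: "w = v \<circ> transpose i j"
    by (auto simp: kcover_def)
  show ?case
  proof (cases "v p = u p")
    case True
    with step.prems ik kj w_def \<open>k < p\<close> have "j = p"
      by (auto simp: transpose_def split: if_splits)
    have "u i \<le> v i"
      using rtranclp_kstep_left_mono[OF step.hyps(1) ik] .
    also have "v i < v j"
      using c by (rule kcover_imp_less)
    finally show ?thesis
      using ik \<open>j = p\<close> True w_def by auto
  next
    case False
    then obtain q where "q \<le> k" "u q < u p" "u p \<le> v q"
      using step.IH by blast
    moreover have "v q \<le> w q"
      using step.hyps(2) \<open>q \<le> k\<close> by (rule kstep_left_mono)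
    ultimately show ?thesis by force
  qed
qed

theorem lemma2p25:
  fixes a n k i :: int and u w :: "int \<Rightarrow> int"
  assumes "a \<le> n" and "u \<in> S_int a n" and "w \<in> S_int a n"
    and "kchain k u w"
    and "i \<in> u ` {k<..n}" and "i \<notin> fixI {k<..n} u w"
  shows "\<exists>t\<in>{a..k}. i \<le> w t"
proof -
  obtain p where p: "p \<in> {k<..n}" "u p = i"
    using assms(5) by blast
  have "w p \<noteq> u p"
    using assms(6) p unfolding fixI_def by force
  then obtain q where q: "q \<le> k" "u q < i" "i \<le> w q"
    using rtranclp_kstep_moved_value[OF kchain_imp_rtranclp_kstep[OF assms(4)]] p by force
  have "a \<le> q"
  proof (rule ccontr)
    assume "\<not> a \<le> q"
    then have "u q = q" "w q = q"
      using assms(2,3) unfolding S_int_def by auto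
    with q show False by simp
  qed
  with q show ?thesis by auto
qed

end
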